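(* Let $(x_n)_{n \in \mathbb{N}}$ be a sequence in $[0,1)$ with the following property: there exist $s \in \mathbb{N}$ and a positive real number $\gamma$ such that for infinitely many $N$ the point set $x_1, \ldots, x_N$ has a subset $x_{j_1}, \ldots, x_{j_M}$ with $M \geq \gamma N$ elements which has at most $s$ different distances between neighbouring elements. Then $(x_n)_{n \in \mathbb{N}}$ does not have Poissonian pair correlations.
   Context: For real $x$, $\|x\|$ denotes the distance from $x$ to the nearest integer. A sequence $(x_n)_{n\in\mathbb{N}}$ in $[0,1)$ has Poissonian pair correlations if for every $s \geq 0$, $$F_N(s) := \frac{1}{N}\#\left\{1 \leq l \neq m \leq N : \|x_l - x_m\| \leq \frac{s}{N}\right\} \to 2s \quad (N\to\infty).$$ For a finite point set in $[0,1)$, the distances between neighbouring elements (gaps) are the distances between consecutive points when the set is arranged in increasing order. *)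

theory Defs
  imports Complex_Main
begin

definition dist_int :: "real \<Rightarrow> real" where
  "dist_int t = min (frac t) (1 - frac t)"

text \<open>Pair correlation counting function F_N(s), sequence indexed from 1.\<close>
definition pair_corr :: "(nat \<Rightarrow> real) \<Rightarrow> nat \<Rightarrow> real \<Rightarrow> real" where
  "pair_corr x N s = real (card {(l, m). l \<in> {1..N} \<and> m \<in> {1..N} \<and> l \<noteq> m \<and>
       dist_int (x l - x m) \<le> s / real N}) / real N"

definition poissonian_pair_corr :: "(nat \<Rightarrow> real) \<Rightarrow> bool" where
  "poissonian_pair_corr x \<longleftrightarrow> (\<forall>s::real. s \<ge> 0 \<longrightarrow> (\<lambda>N. pair_corr x N s) \<longlonglongrightarrow> 2 * s)"

definition gaps :: "(nat \<Rightarrow> real) \<Rightarrow> nat set \<Rightarrow> real set" where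
  "gaps x J = (let ys = sort (map x (sorted_list_of_set J))
               in {ys ! (i + 1) - ys ! i | i. i + 1 < length ys})"

end

theory Submission
  imports Defs
begin

(* Sort the M points indexed by J. Their M - 1 gaps add up to at most 1, so at most N/u of them
   exceed u/N. The remaining gaps take at most s values d, and each neighbouring pair with gap d is
   a pair (l, m) with dist_int (x l - x m) = d. Such pairs lie in a window a/N < dist <= b/N with
   b - a small, whose count N (F_N(b) - F_N(a)) is about 2 (b - a) N under Poissonian pair
   correlations. Hence M <= 1 + N/u + s * eta * N with eta arbitrarily small, contradicting
   M >= gamma * N once u and eta are chosen in terms of gamma and s. *)

lemma map_insort_key: "map f (insort_key f a ys) = insort (f a) (map f ys)"
  by (induction ys) auto

lemma map_sort_key: "map f (sort_key f xs) = sort (map f xs)"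
  by (induction xs) (auto simp: map_insort_key)

definition order_by :: "(nat \<Rightarrow> real) \<Rightarrow> nat set \<Rightarrow> nat list" where
  "order_by x J = sort_key x (sorted_list_of_set J)"

definition gap :: "(nat \<Rightarrow> real) \<Rightarrow> nat set \<Rightarrow> nat \<Rightarrow> real" where
  "gap x J i = x (order_by x J ! Suc i) - x (order_by x J ! i)"

lemma length_order_by [simp]: "length (order_by x J) = card J"
  by (simp add: order_by_def)

lemma distinct_order_by: "distinct (order_by x J)"
  by (simp add: order_by_def)

lemma set_order_by: "finite J \<Longrightarrow> set (order_by x J) = J"
  by (simp add: order_by_def)

lemma sorted_order_by: "sorted (map x (order_by x J))"
  by (simp add: order_by_def)

lemma gaps_eq_image_gap: "gaps x J = gap x J ` {..<card J - 1}"
proof -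
  have "sort (map x (sorted_list_of_set J)) = map x (order_by x J)"
    by (simp add: order_by_def map_sort_key)
  then show ?thesis
    unfolding gaps_def Let_def gap_def by (force simp: less_diff_conv)
qed

lemma gap_nonneg: "Suc i < card J \<Longrightarrow> 0 \<le> gap x J i"
  using sorted_order_by[of x J] by (simp add: gap_def sorted_iff_nth_mono)

lemma card_large_increments:
  fixes f :: "nat \<Rightarrow> real"
  assumes mono: "\<And>i. i < m \<Longrightarrow> f i \<le> f (Suc i)" and "\<delta> > 0"
  shows "\<delta> * card {i. i < m \<and> \<delta> < f (Suc i) - f i} \<le> f m - f 0"
proof -
  define B where "B = {i. i < m \<and> \<delta> < f (Suc i) - f i}"
  have "\<delta> * card B = (\<Sum>i\<in>B. \<delta>)" by simp
  also have "\<dots> \<le> (\<Sum>i\<in>B. f (Suc i) - f i)"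
    by (intro sum_mono) (auto simp: B_def less_imp_le)
  also have "\<dots> \<le> (\<Sum>i<m. f (Suc i) - f i)"
    by (intro sum_mono2) (auto simp: B_def mono)
  also have "\<dots> = f m - f 0"
    by (rule sum_lessThan_telescope)
  finally show ?thesis unfolding B_def .
qed

lemma card_large_gaps:
  assumes "finite J" "x ` J \<subseteq> {a..b}" "a \<le> b" "\<delta> > 0"
  shows "\<delta> * card {i. i < card J - 1 \<and> \<delta> < gap x J i} \<le> b - a"
proof (cases "J = {}")
  case False
  define y where "y i = x (order_by x J ! i)" for i
  have "y i \<in> {a..b}" if "i < card J" for i
    using that assms(1,2) set_order_by[of J x] nth_mem[of i "order_by x J"] by (auto simp: y_def)
  moreover have "card J > 0" using False assms(1) by (simp add: card_gt_0_iff)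
  ultimately have "y (card J - 1) - y 0 \<le> b - a"
    by (metis atLeastAtMost_iff diff_less diff_mono zero_less_one)
  moreover have "y i \<le> y (Suc i)" if "i < card J - 1" for i
    using gap_nonneg[of i J x] that by (simp add: gap_def y_def)
  ultimately show ?thesis
    using card_large_increments[of "card J - 1" y \<delta>] assms(4) by (simp add: gap_def y_def)
qed (use assms in simp)

definition pairs_at_dist :: "(nat \<Rightarrow> real) \<Rightarrow> nat set \<Rightarrow> real \<Rightarrow> (nat \<times> nat) set" where
  "pairs_at_dist x I d = {(l, m). l \<in> I \<and> m \<in> I \<and> l \<noteq> m \<and> dist_int (x l - x m) = d}"

lemma finite_pairs_at_dist: "finite I \<Longrightarrow> finite (pairs_at_dist x I d)"
  by (rule finite_subset[of _ "I \<times> I"]) (auto simp: pairs_at_dist_def)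

lemma pairs_at_dist_mono: "I \<subseteq> I' \<Longrightarrow> pairs_at_dist x I d \<subseteq> pairs_at_dist x I' d"
  by (auto simp: pairs_at_dist_def)

lemma dist_int_eq_self: "0 \<le> t \<Longrightarrow> t \<le> 1/2 \<Longrightarrow> dist_int t = t"
  by (simp add: dist_int_def frac_eq)

lemma card_gap_eq_le:
  assumes "finite J" "0 \<le> d" "d \<le> 1/2"
  shows "card {i. i < card J - 1 \<and> gap x J i = d} \<le> card (pairs_at_dist x J d)"
proof -
  let ?\<sigma> = "order_by x J"
  have "inj_on (\<lambda>i. (?\<sigma> ! Suc i, ?\<sigma> ! i)) {i. i < card J - 1 \<and> gap x J i = d}"
  proof (rule inj_onI)
    fix i j assume "i \<in> {i. i < card J - 1 \<and> gap x J i = d}"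
      "j \<in> {i. i < card J - 1 \<and> gap x J i = d}"
      "(?\<sigma> ! Suc i, ?\<sigma> ! i) = (?\<sigma> ! Suc j, ?\<sigma> ! j)"
    then have "i < length ?\<sigma>" "j < length ?\<sigma>" "?\<sigma> ! i = ?\<sigma> ! j" by auto
    then show "i = j"
      using distinct_order_by[of x J] nth_eq_iff_index_eq by blast
  qed
  moreover have "(?\<sigma> ! Suc i, ?\<sigma> ! i) \<in> pairs_at_dist x J d"
    if "i < card J - 1" "gap x J i = d" for i
  proof -
    have "?\<sigma> ! Suc i \<in> J" "?\<sigma> ! i \<in> J"
      using that(1) set_order_by[OF assms(1)] nth_mem[of _ ?\<sigma>] by auto
    moreover have "?\<sigma> ! Suc i \<noteq> ?\<sigma> ! i"
      using that(1) distinct_order_by[of x J] by (simp add: nth_eq_iff_index_eq)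
    ultimately show ?thesis
      using that(2) assms(2,3) by (simp add: pairs_at_dist_def gap_def dist_int_eq_self)
  qed
  ultimately show ?thesis
    using finite_pairs_at_dist[OF assms(1)] by (intro card_inj_on_le) auto
qed

lemma card_le_gap_multiplicity:
  fixes c :: real
  assumes "finite J" "x ` J \<subseteq> {a..b}" "a \<le> b" "0 < \<delta>" "\<delta> \<le> 1/2"
    and mult: "\<And>d. 0 \<le> d \<Longrightarrow> d \<le> \<delta> \<Longrightarrow> real (card (pairs_at_dist x J d)) \<le> c"
  shows "real (card J) \<le> 1 + (b - a) / \<delta> + card (gaps x J) * c"
proof -
  define m where "m = card J - 1"
  define large where "large = {i. i < m \<and> \<delta> < gap x J i}"
  define small where "small = gaps x J \<inter> {..\<delta>}"
  define with_gap where "with_gap d = {i. i < m \<and> gap x J i = d}" for d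
  have gaps: "gaps x J = gap x J ` {..<m}"
    unfolding m_def by (rule gaps_eq_image_gap)
  have "c \<ge> 0" using mult[of 0] assms(4) by simp
  have "{..<m} \<subseteq> large \<union> (\<Union>d\<in>small. with_gap d)"
    by (auto simp: large_def small_def with_gap_def gaps not_less)
  moreover have "finite large" "finite (\<Union>d\<in>small. with_gap d)"
    by (auto simp: large_def with_gap_def intro: finite_subset[of _ "{..<m}"])
  ultimately have "m \<le> card large + card (\<Union>d\<in>small. with_gap d)"
    by (metis card_Un_le card_lessThan card_mono finite_UnI le_trans)
  also have "\<dots> \<le> card large + (\<Sum>d\<in>small. card (with_gap d))"
    using card_UN_le[of small with_gap] gaps by (simp add: small_def)
  finally have split: "real m \<le> card large + (\<Sum>d\<in>small. real (card (with_gap d)))"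
    by (simp flip: of_nat_sum)
  have large: "real (card large) \<le> (b - a) / \<delta>"
    using card_large_gaps[OF assms(1-4)] assms(4)
    by (simp add: large_def m_def field_simps)
  have "real (card (with_gap d)) \<le> c" if "d \<in> small" for d
  proof -
    have "0 \<le> d" "d \<le> \<delta>"
      using that gap_nonneg[of _ J x] by (auto simp: small_def gaps m_def)
    then show ?thesis
      using card_gap_eq_le[OF assms(1), of d x] mult[of d] assms(5)
      by (simp add: with_gap_def m_def)
  qed
  then have "(\<Sum>d\<in>small. real (card (with_gap d))) \<le> card small * c"
    by (rule sum_bounded_above)
  also have "\<dots> \<le> card (gaps x J) * c"
    using \<open>c \<ge> 0\<close> gaps by (intro mult_right_mono) (auto simp: small_def card_mono)
  finally show ?thesis
    using split large unfolding m_def by linarith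
qed

definition close_pairs :: "(nat \<Rightarrow> real) \<Rightarrow> nat set \<Rightarrow> real \<Rightarrow> (nat \<times> nat) set" where
  "close_pairs x I r = {(l, m). l \<in> I \<and> m \<in> I \<and> l \<noteq> m \<and> dist_int (x l - x m) \<le> r}"

lemma pair_corr_eq_card_close_pairs:
  "pair_corr x N t = card (close_pairs x {1..N} (t / N)) / N"
  by (simp add: pair_corr_def close_pairs_def)

lemma finite_close_pairs: "finite I \<Longrightarrow> finite (close_pairs x I r)"
  by (rule finite_subset[of _ "I \<times> I"]) (auto simp: close_pairs_def)

lemma close_pairs_mono: "r \<le> r' \<Longrightarrow> close_pairs x I r \<subseteq> close_pairs x I r'"
  by (auto simp: close_pairs_def)

lemma dist_int_nonneg: "0 \<le> dist_int t"
  using frac_lt_1[of t] by (simp add: dist_int_def)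

lemma pair_corr_neg:
  assumes "t < 0"
  shows "pair_corr x N t = 0"
proof (cases "N = 0")
  case False
  then have "t / N < 0" using assms by (simp add: divide_neg_pos)
  then have "\<not> dist_int (x l - x m) \<le> t / N" for l m
    using dist_int_nonneg[of "x l - x m"] by linarith
  then have "close_pairs x {1..N} (t / N) = {}"
    by (auto simp: close_pairs_def)
  then show ?thesis by (simp add: pair_corr_eq_card_close_pairs)
qed (simp add: pair_corr_def)

(* F_N vanishes at negative arguments, so the window of index k = 0 below needs no special case. *)
lemma poissonian_pair_corr_tendsto:
  assumes "poissonian_pair_corr x"
  shows "(\<lambda>N. pair_corr x N t) \<longlonglongrightarrow> 2 * max t 0"
proof (cases "t < 0")
  case True
  then show ?thesis by (simp add: pair_corr_neg)
next
  case False
  then show ?thesis using assms by (simp add: poissonian_pair_corr_def)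
qed

lemma card_pairs_at_dist_le_pair_corr_diff:
  assumes "N > 0" "a / N < d" "d \<le> b / N"
  shows "real (card (pairs_at_dist x {1..N} d)) \<le> N * (pair_corr x N b - pair_corr x N a)"
proof -
  let ?C = "\<lambda>r. close_pairs x {1..N} (r / N)"
  have sub: "?C a \<subseteq> ?C b"
    using assms by (intro close_pairs_mono) simp
  have "pairs_at_dist x {1..N} d \<subseteq> ?C b - ?C a"
    using assms(2,3) by (auto simp: pairs_at_dist_def close_pairs_def)
  then have "card (pairs_at_dist x {1..N} d) \<le> card (?C b) - card (?C a)"
    by (metis card_Diff_subset card_mono finite_Diff finite_atLeastAtMost finite_close_pairs
          finite_subset sub)
  moreover have "card (?C a) \<le> card (?C b)"
    by (intro card_mono finite_close_pairs sub) simp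
  ultimately show ?thesis
    using assms(1) by (simp add: pair_corr_eq_card_close_pairs right_diff_distrib of_nat_diff)
qed

lemma poissonian_pairs_at_dist_small:
  fixes \<eta> L :: real
  assumes "poissonian_pair_corr x" "\<eta> > 0"
  shows "\<forall>\<^sub>F N in sequentially.
    \<forall>d \<in> {0..L / N}. real (card (pairs_at_dist x {1..N} d)) \<le> \<eta> * N"
proof -
  define \<epsilon> where "\<epsilon> = \<eta> / 3"
  define K where "K = nat \<lceil>L / \<epsilon>\<rceil>"
  have "\<epsilon> > 0" using assms(2) by (simp add: \<epsilon>_def)
  have window: "\<forall>\<^sub>F N in sequentially.
      pair_corr x N (k * \<epsilon>) - pair_corr x N ((real k - 1) * \<epsilon>) < \<eta>" for k :: nat
  proof -
    have "(\<lambda>N. pair_corr x N (k * \<epsilon>) - pair_corr x N ((real k - 1) * \<epsilon>))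
        \<longlonglongrightarrow> 2 * max (k * \<epsilon>) 0 - 2 * max ((real k - 1) * \<epsilon>) 0"
      by (intro tendsto_diff poissonian_pair_corr_tendsto assms(1))
    moreover have "2 * max (k * \<epsilon>) 0 - 2 * max ((real k - 1) * \<epsilon>) 0 < \<eta>"
      using \<open>\<epsilon> > 0\<close> by (cases k) (auto simp: \<epsilon>_def algebra_simps)
    ultimately show ?thesis by (rule order_tendstoD)
  qed
  have "\<forall>\<^sub>F N in sequentially. N > 0 \<and>
      (\<forall>k \<in> {..K}. pair_corr x N (k * \<epsilon>) - pair_corr x N ((real k - 1) * \<epsilon>) < \<eta>)"
    by (intro eventually_conj eventually_gt_at_top eventually_ball_finite finite_atMost ballI window)
  then show ?thesis
  proof eventually_elim
    case (elim N)
    show ?case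
    proof
      fix d assume d: "d \<in> {0..L / N}"
      define k where "k = nat \<lceil>d * N / \<epsilon>\<rceil>"
      have "k \<le> K"
        using d elim \<open>\<epsilon> > 0\<close> unfolding k_def K_def
        by (intro nat_mono ceiling_mono divide_right_mono) (auto simp: field_simps)
      have "real k - 1 < d * N / \<epsilon>" "d * N / \<epsilon> \<le> real k"
        using d \<open>\<epsilon> > 0\<close> ceiling_correct[of "d * N / \<epsilon>"] unfolding k_def by auto
      then have "(real k - 1) * \<epsilon> / N < d" "d \<le> k * \<epsilon> / N"
        using elim \<open>\<epsilon> > 0\<close> by (simp_all add: field_simps)
      then have "real (card (pairs_at_dist x {1..N} d))
          \<le> N * (pair_corr x N (k * \<epsilon>) - pair_corr x N ((real k - 1) * \<epsilon>))"
        using elim by (intro card_pairs_at_dist_le_pair_corr_diff) auto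
      also have "\<dots> \<le> N * \<eta>"
        using elim \<open>k \<le> K\<close> by (intro mult_left_mono) (simp_all add: less_imp_le)
      finally show "real (card (pairs_at_dist x {1..N} d)) \<le> \<eta> * N"
        by (simp add: mult.commute)
    qed
  qed
qed

lemma poissonian_imp_many_gaps:
  fixes x :: "nat \<Rightarrow> real" and \<gamma> :: real and s :: nat
  assumes "\<And>n. n \<ge> 1 \<Longrightarrow> x n \<in> {0..1}" "poissonian_pair_corr x" "\<gamma> > 0"
  shows "\<forall>\<^sub>F N in sequentially. \<forall>J \<subseteq> {1..N}. \<gamma> * N \<le> card J \<longrightarrow> s < card (gaps x J)"
proof -
  define \<eta> where "\<eta> = \<gamma> / (4 * (s + 1))"
  have "\<eta> > 0" using assms(3) by (simp add: \<eta>_def)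
  have "\<forall>\<^sub>F N in sequentially. nat \<lceil>8 / \<gamma>\<rceil> \<le> N \<and>
      (\<forall>d \<in> {0..4 / \<gamma> / N}. real (card (pairs_at_dist x {1..N} d)) \<le> \<eta> * N)"
    by (intro eventually_conj eventually_ge_at_top
        poissonian_pairs_at_dist_small assms(2) \<open>\<eta> > 0\<close>)
  then show ?thesis
  proof eventually_elim
    case (elim N)
    show ?case
    proof (intro allI impI, rule ccontr)
      fix J assume J: "J \<subseteq> {1..N}" "\<gamma> * N \<le> card J" "\<not> s < card (gaps x J)"
      have "\<gamma> * N \<ge> 8" using elim assms(3) by (simp add: field_simps)
      define \<delta> where "\<delta> = 4 / \<gamma> / N"
      have "0 < \<delta>" "\<delta> \<le> 1/2"
        using \<open>\<gamma> * N \<ge> 8\<close> assms(3) by (auto simp: \<delta>_def field_simps)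
      have "real (card J) \<le> 1 + (1 - 0) / \<delta> + card (gaps x J) * (\<eta> * N)"
      proof (rule card_le_gap_multiplicity)
        show "finite J" using J(1) finite_subset by blast
        show "x ` J \<subseteq> {0..1}" using J(1) assms(1) by fastforce
        show "real (card (pairs_at_dist x J d)) \<le> \<eta> * N" if "0 \<le> d" "d \<le> \<delta>" for d
        proof -
          have "card (pairs_at_dist x J d) \<le> card (pairs_at_dist x {1..N} d)"
            by (intro card_mono finite_pairs_at_dist pairs_at_dist_mono J(1)) simp
          moreover have "d \<in> {0..4 / \<gamma> / N}" using that by (simp add: \<delta>_def)
          ultimately show ?thesis using elim by (meson of_nat_mono order.trans)
        qed
      qed (use \<open>0 < \<delta>\<close> \<open>\<delta> \<le> 1/2\<close> in simp_all)
      also have "\<dots> \<le> 1 + \<gamma> * N / 4 + s * (\<eta> * N)"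
        using J(3) \<open>\<eta> > 0\<close> by (simp add: \<delta>_def mult_right_mono)
      also have "s * (\<eta> * N) \<le> \<gamma> * N / 4"
        using assms(3) by (simp add: \<eta>_def field_simps)
      finally show False
        using J(2) \<open>\<gamma> * N \<ge> 8\<close> by linarith
    qed
  qed
qed

theorem proposition1:
  fixes x :: "nat \<Rightarrow> real" and s :: nat and \<gamma> :: real
  assumes "\<And>n. n \<ge> 1 \<Longrightarrow> x n \<in> {0..<1}"
    and "\<gamma> > 0"
    and "infinite {N. \<exists>J. J \<subseteq> {1..N} \<and> real (card J) \<ge> \<gamma> * real N \<and> card (gaps x J) \<le> s}"
  shows "\<not> poissonian_pair_corr x"
proof
  assume "poissonian_pair_corr x"
  have "\<exists>\<^sub>F N in sequentially.
      \<exists>J. J \<subseteq> {1..N} \<and> real (card J) \<ge> \<gamma> * real N \<and> card (gaps x J) \<le> s"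
    using assms(3) by (simp add: frequently_cofinite flip: cofinite_eq_sequentially)
  moreover have "x n \<in> {0..1}" if "n \<ge> 1" for n
    using assms(1)[OF that] by simp
  then have "\<forall>\<^sub>F N in sequentially.
      \<forall>J \<subseteq> {1..N}. \<gamma> * N \<le> card J \<longrightarrow> s < card (gaps x J)"
    by (intro poissonian_imp_many_gaps \<open>poissonian_pair_corr x\<close> assms(2))
  ultimately have "\<exists>\<^sub>F N in sequentially.
      (\<forall>J \<subseteq> {1..N}. \<gamma> * N \<le> card J \<longrightarrow> s < card (gaps x J)) \<and>
      (\<exists>J. J \<subseteq> {1..N} \<and> real (card J) \<ge> \<gamma> * real N \<and> card (gaps x J) \<le> s)"
    by (rule frequently_eventually_conj)
  then show False
    by (rule frequentlyE) (auto simp: not_le)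
qed

end
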